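(* Let $F$ be a positive integer, $p\ge1$, and $n_1<n_2<\cdots<n_p<F$ positive integers with $d=\gcd\{n_1,\dots,n_p\}$ satisfying $d\nmid F$. For $i\in\{1,\dots,p\}$ let $d_i=\gcd\{n_1,\dots,n_i\}$; for $j\in\{1,\dots,p-1\}$ let $k_j=\max\{k\in\mathbb{N}\mid n_j+kd_j<n_{j+1}\}$, and let $k_p=\max\{k\in\mathbb{N}\mid n_p+kd_p<F\}$. Then $\{n_1,\dots,n_p\}$ is a $\mathrm{Sat}(F)$-set and $$\mathrm{Sat}(F)[\{n_1,\dots,n_p\}]=\{0\}\cup\bigcup_{j=1}^{p}\{n_j+kd_j\mid 0\le k\le k_j\}\cup\{x\in\mathbb{N}\mid x\ge F+1\}.$$
   Context: A numerical semigroup is a subset $S\subseteq\mathbb{N}$ closed under addition, containing $0$, with $\mathbb{N}\setminus S$ finite; its Frobenius number $\mathrm{F}(S)$ is the largest integer not in $S$. For $A\subseteq\mathbb{N}$ and $a\in A$, let $\mathrm{d}_A(a)=\gcd\{x\in A\mid x\le a\}$. A numerical semigroup $S$ is saturated if $s+\mathrm{d}_S(s)\in S$ for all $s\in S\setminus\{0\}$. For a positive integer $F$, $\mathrm{Sat}(F)$ denotes the set of all saturated numerical semigroups $S$ with $\mathrm{F}(S)=F$. Let $\Delta(F+1)=\{0\}\cup\{x\in\mathbb{N}\mid x\ge F+1\}$. A set $X\subseteq\mathbb{N}$ is a $\mathrm{Sat}(F)$-set if $X\cap\Delta(F+1)=\emptyset$ and there exists $S\in\mathrm{Sat}(F)$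 with $X\subseteq S$. For a $\mathrm{Sat}(F)$-set $X$, $\mathrm{Sat}(F)[X]$ denotes the intersection of all elements of $\mathrm{Sat}(F)$ containing $X$ (the smallest element of $\mathrm{Sat}(F)$ containing $X$). *)

theory Defs
  imports Main
begin

definition numerical_semigroup :: "nat set \<Rightarrow> bool" where
  "numerical_semigroup S \<longleftrightarrow> 0 \<in> S \<and> (\<forall>x\<in>S. \<forall>y\<in>S. x + y \<in> S) \<and> finite (UNIV - S)"

definition frobenius :: "nat set \<Rightarrow> nat" where
  "frobenius S = Max (UNIV - S)"

definition dA :: "nat set \<Rightarrow> nat \<Rightarrow> nat" where
  "dA A a = Gcd {x \<in> A. x \<le> a}"

definition saturated :: "nat set \<Rightarrow> bool" where
  "saturated S \<longleftrightarrow> numerical_semigroup S \<and> (\<forall>s \<in> S - {0}. s + dA S s \<in> S)"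

definition Sat :: "nat \<Rightarrow> nat set set" where
  "Sat F = {S. saturated S \<and> UNIV - S \<noteq> {} \<and> frobenius S = F}"

definition Delta :: "nat \<Rightarrow> nat set" where
  "Delta m = {0} \<union> {x. x \<ge> m}"

definition Sat_set :: "nat \<Rightarrow> nat set \<Rightarrow> bool" where
  "Sat_set F X \<longleftrightarrow> X \<inter> Delta (F + 1) = {} \<and> (\<exists>S \<in> Sat F. X \<subseteq> S)"

definition Sat_closure :: "nat \<Rightarrow> nat set \<Rightarrow> nat set" where
  "Sat_closure F X = \<Inter> {S \<in> Sat F. X \<subseteq> S}"

end

theory Submission
  imports Defs
begin

text \<open>Write \<open>d\<^sub>j\<close> for the gcd of \<open>n\<^sub>1, \<dots>, n\<^sub>j\<close> and \<open>L\<^sub>j\<close> for \<open>n\<^sub>j\<^sub>+\<^sub>1\<close> (or \<open>F\<close> when \<open>j = p\<close>).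
  The candidate \<open>T\<close> is \<open>{0}\<close>, the blocks \<open>{x. d\<^sub>j dvd x \<and> n\<^sub>j \<le> x < L\<^sub>j}\<close> and everything above \<open>F\<close>.
  Since the \<open>d\<^sub>j\<close> form a divisor chain, any multiple of \<open>d\<^sub>j\<close> that is at least \<open>n\<^sub>j\<close> lies in \<open>T\<close>,
  except possibly \<open>F\<close>, which is excluded because \<open>d\<^sub>p\<close> does not divide \<open>F\<close>; this gives closure
  under addition and saturation, as \<open>d\<^sub>T(s) = d\<^sub>j\<close> on the \<open>j\<close>-th block. Conversely a saturated
  semigroup containing \<open>n\<^sub>j\<close> contains \<open>n\<^sub>j + c\<close> for every multiple \<open>c\<close> of \<open>d\<^sub>S(n\<^sub>j)\<close>, and
  \<open>d\<^sub>S(n\<^sub>j)\<close> divides \<open>d\<^sub>j\<close>, so \<open>T\<close> is the least element of \<open>Sat(F)\<close> containing the \<open>n\<^sub>i\<close>.\<close>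

lemma dA_dvd: "x \<in> A \<Longrightarrow> x \<le> a \<Longrightarrow> dA A a dvd x"
  unfolding dA_def by (auto intro: Gcd_dvd)

lemma dvd_dA: "(\<And>x. x \<in> A \<Longrightarrow> x \<le> a \<Longrightarrow> d dvd x) \<Longrightarrow> d dvd dA A a"
  unfolding dA_def by (auto intro: Gcd_greatest)

lemma saturated_add_dvd_dA:
  assumes S: "saturated S" and "t \<in> S" "t > 0" "dA S t dvd c"
  shows "t + c \<in> S"
  using assms(2-)
proof (induction c arbitrary: t rule: less_induct)
  case (less c)
  show ?case
  proof (cases "c = 0")
    case True
    then show ?thesis using less.prems by simp
  next
    case False
    define e where "e = dA S t"
    have "e dvd t" unfolding e_def using less.prems by (simp add: dA_dvd)
    then have "e > 0" using less.prems by (auto intro: Nat.gr0I)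
    have "e \<le> c" using less.prems False by (simp add: e_def dvd_imp_le)
    have "t + e \<in> S" using S less.prems unfolding saturated_def e_def by auto
    moreover have "dA S (t + e) dvd e"
      unfolding e_def by (auto intro!: dvd_dA dA_dvd)
    then have "dA S (t + e) dvd c - e"
      using less.prems(3) dvd_trans dvd_diff_nat unfolding e_def by blast
    ultimately have "t + e + (c - e) \<in> S"
      using less.IH[of "c - e" "t + e"] \<open>e > 0\<close> \<open>e \<le> c\<close> False by simp
    then show ?thesis using \<open>e \<le> c\<close> by simp
  qed
qed

lemma Sat_mem_if_gt:
  assumes "S \<in> Sat F" "F < x"
  shows "x \<in> S"
proof (rule ccontr)
  assume "x \<notin> S"
  moreover have "finite (UNIV - S)"
    using assms(1) unfolding Sat_def saturated_def numerical_semigroup_def by simp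
  ultimately have "x \<le> frobenius S" unfolding frobenius_def by (intro Max_ge) auto
  then show False using assms unfolding Sat_def by simp
qed

lemma in_SatI:
  assumes "0 \<in> T" and "\<And>a b. a \<in> T \<Longrightarrow> b \<in> T \<Longrightarrow> a + b \<in> T"
    and "\<And>s. s \<in> T \<Longrightarrow> s \<noteq> 0 \<Longrightarrow> s + dA T s \<in> T"
    and "F \<notin> T" and "\<And>x. F < x \<Longrightarrow> x \<in> T"
  shows "T \<in> Sat F"
proof -
  have gaps: "UNIV - T \<subseteq> {..F}" using assms(5) leI by blast
  then have "finite (UNIV - T)" by (rule finite_subset) simp
  moreover have "frobenius T = F"
    unfolding frobenius_def
    using \<open>finite (UNIV - T)\<close> gaps assms(4) by (intro Max_eqI) auto
  ultimately show ?thesis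
    using assms unfolding Sat_def saturated_def numerical_semigroup_def by blast
qed

lemma Sat_closure_eqI:
  assumes "T \<in> Sat F" "X \<subseteq> T" and "\<And>S. S \<in> Sat F \<Longrightarrow> X \<subseteq> S \<Longrightarrow> T \<subseteq> S"
  shows "Sat_closure F X = T"
  unfolding Sat_closure_def using assms by blast

lemma progression_le_Greatest:
  fixes a b d :: nat
  assumes "d > 0" "a < b"
  shows "{a + k * d | k. k \<le> (GREATEST k. a + k * d < b)} = {a + k * d | k. a + k * d < b}"
proof -
  have bounded: "k \<le> b" if "a + k * d < b" for k
  proof -
    have "k \<le> k * d" using \<open>d > 0\<close> by simp
    then show ?thesis using that by linarith
  qed
  have "a + 0 * d < b" using \<open>a < b\<close> by simp
  then have "a + (GREATEST k. a + k * d < b) * d < b"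
    by (rule GreatestI_nat) (rule bounded)
  moreover have "k \<le> (GREATEST k. a + k * d < b)" if "a + k * d < b" for k
    using that by (rule Greatest_le_nat) (rule bounded)
  ultimately have "k \<le> (GREATEST k. a + k * d < b) \<longleftrightarrow> a + k * d < b" for k
    by (meson add_le_cancel_left le_less_trans mult_le_mono1)
  then show ?thesis by simp
qed

lemma progression_below_eq:
  fixes a b d :: nat
  assumes "d dvd a"
  shows "{a + k * d | k. a + k * d < b} = {x. d dvd x \<and> a \<le> x \<and> x < b}"
proof (intro set_eqI iffI)
  fix x assume "x \<in> {x. d dvd x \<and> a \<le> x \<and> x < b}"
  then have "d dvd x - a" "a \<le> x" "x < b" using assms dvd_diff_nat by auto
  then have "x = a + (x - a) div d * d" by simp
  then have "\<exists>k. x = a + k * d \<and> a + k * d < b" using \<open>x < b\<close> by metis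
  then show "x \<in> {a + k * d | k. a + k * d < b}" by simp
qed (use assms in auto)

locale Sat_generators =
  fixes F p :: nat and n :: "nat \<Rightarrow> nat"
  assumes p_pos: "p \<ge> 1"
    and n_pos: "\<And>i. 1 \<le> i \<Longrightarrow> i \<le> p \<Longrightarrow> n i > 0"
    and n_step: "\<And>i. 1 \<le> i \<Longrightarrow> i < p \<Longrightarrow> n i < n (Suc i)"
    and n_last: "n p < F"
    and Gcd_not_dvd: "\<not> Gcd (n ` {1..p}) dvd F"
begin

definition D :: "nat \<Rightarrow> nat" where "D j = Gcd (n ` {1..j})"

definition L :: "nat \<Rightarrow> nat" where "L j = (if j < p then n (Suc j) else F)"

definition block :: "nat \<Rightarrow> nat set" where "block j = {x. D j dvd x \<and> n j \<le> x \<and> x < L j}"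

definition T :: "nat set" where "T = {0} \<union> (\<Union>j\<in>{1..p}. block j) \<union> {x. F < x}"

lemma n_less: "1 \<le> i \<Longrightarrow> i < j \<Longrightarrow> j \<le> p \<Longrightarrow> n i < n j"
proof (induction j rule: less_induct)
  case (less j)
  then obtain j' where "j = Suc j'" "i \<le> j'" by (metis less_Suc_eq_le lessE)
  then show ?case
    using less.IH[of j'] less.prems n_step[of j'] by (cases "i = j'") auto
qed

lemma n_le: "1 \<le> i \<Longrightarrow> i \<le> j \<Longrightarrow> j \<le> p \<Longrightarrow> n i \<le> n j"
  using n_less[of i j] by (cases "i = j") auto

lemma D_dvd_n: "1 \<le> i \<Longrightarrow> i \<le> j \<Longrightarrow> D j dvd n i"
  unfolding D_def by (auto intro: Gcd_dvd)

lemma D_dvd_D: "i \<le> j \<Longrightarrow> D j dvd D i"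
  unfolding D_def by (rule Gcd_greatest, rule Gcd_dvd) auto

lemma D_pos: "j \<in> {1..p} \<Longrightarrow> D j > 0"
  using D_dvd_n[of 1 j] n_pos[of 1] p_pos by (auto intro: Nat.gr0I)

lemma n_less_L: "j \<in> {1..p} \<Longrightarrow> n j < L j"
  using n_step n_last unfolding L_def by auto

lemma L_le_F: "j \<in> {1..p} \<Longrightarrow> L j \<le> F"
  using n_le[of "Suc j" p] n_last unfolding L_def by auto

lemma n_mem_block: "j \<in> {1..p} \<Longrightarrow> n j \<in> block j"
  unfolding block_def using D_dvd_n n_less_L by auto

lemma block_eq_progression:
  assumes "j \<in> {1..p}"
  shows "{n j + k * D j | k. k \<le> (GREATEST k. n j + k * D j < L j)} = block j"
  unfolding block_def
  using progression_le_Greatest[OF D_pos n_less_L] progression_below_eq[OF D_dvd_n] assms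
  by auto

lemma block_index_mono:
  assumes "x \<in> block i" "y \<in> block j" "i \<in> {1..p}" "j \<in> {1..p}" "x \<le> y"
  shows "i \<le> j"
proof (rule ccontr)
  assume "\<not> i \<le> j"
  then have "L j \<le> n i" using n_le[of "Suc j" i] assms(3,4) unfolding L_def by auto
  then show False using assms unfolding block_def by auto
qed

text \<open>Descending through the blocks: a multiple of \<open>D j\<close> beyond block \<open>j\<close> is a multiple
  of the coarser \<open>D (Suc j)\<close> and at least \<open>n (Suc j)\<close>.\<close>

lemma multiple_below_F_mem_block:
  assumes "j \<in> {1..p}" "D j dvd x" "n j \<le> x" "x < F"
  shows "\<exists>i\<in>{1..p}. x \<in> block i"
proof -
  have "j \<le> p" using assms(1) by simp
  then show ?thesis
    using assms
  proof (induction rule: inc_induct)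
    case base
    then have "x \<in> block p" unfolding block_def L_def by simp
    then show ?case using p_pos by (intro bexI[of _ p]) simp_all
  next
    case (step j)
    show ?case
    proof (cases "x < L j")
      case True
      then have "x \<in> block j" using step.prems unfolding block_def by simp
      then show ?thesis using step.prems(1) by blast
    next
      case False
      then have "n (Suc j) \<le> x" using step.hyps unfolding L_def by simp
      moreover have "D (Suc j) dvd x" using dvd_trans[OF D_dvd_D[of j "Suc j"] step.prems(2)] by simp
      moreover have "Suc j \<in> {1..p}" using step.hyps by simp
      ultimately show ?thesis using step.prems(4) by (intro step.IH)
    qed
  qed
qed

lemma multiple_mem_T:
  assumes "j \<in> {1..p}" "D j dvd x" "n j \<le> x"
  shows "x \<in> T"
proof -
  have "\<not> D j dvd F"
    using Gcd_not_dvd dvd_trans[OF D_dvd_D[of j p]] assms(1) unfolding D_def by auto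
  then have "x \<noteq> F" using assms(2) by auto
  then consider "x < F" | "F < x" by linarith
  then show ?thesis
  proof cases
    case 1
    then show ?thesis using multiple_below_F_mem_block[OF assms] unfolding T_def by blast
  qed (simp add: T_def)
qed

lemma block_below_F:
  assumes "j \<in> {1..p}" "x \<in> block j"
  shows "x < F"
proof -
  have "x < L j" using assms(2) unfolding block_def by simp
  then show ?thesis using L_le_F[OF assms(1)] by linarith
qed

lemma block_add_mem_T:
  assumes "a \<in> block i" "b \<in> block j" "j \<in> {1..p}" "i \<le> j"
  shows "a + b \<in> T"
proof (rule multiple_mem_T[OF assms(3)])
  have "D j dvd a"
    using dvd_trans[OF D_dvd_D[OF assms(4)]] assms(1) unfolding block_def by simp
  then show "D j dvd a + b" using assms(2) unfolding block_def by simp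
  show "n j \<le> a + b" using assms(2) unfolding block_def by simp
qed

lemma T_add:
  assumes "a \<in> T" "b \<in> T"
  shows "a + b \<in> T"
proof -
  consider "a = 0" | "b = 0" | "F < a + b"
    | i j where "i \<in> {1..p}" "j \<in> {1..p}" "a \<in> block i" "b \<in> block j"
    using assms unfolding T_def by auto
  then show ?thesis
  proof cases
    case 4
    then show ?thesis
      using block_add_mem_T[of a i b j] block_add_mem_T[of b j a i]
      by (cases "i \<le> j") (simp_all add: add.commute)
  qed (use assms in \<open>simp_all add: T_def\<close>)
qed

lemma D_dvd_dA_T:
  assumes "j \<in> {1..p}" "s \<in> block j"
  shows "D j dvd dA T s"
proof (rule dvd_dA)
  fix x assume "x \<in> T" "x \<le> s"
  moreover have "s < F" using assms by (rule block_below_F)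
  ultimately consider "x = 0" | i where "i \<in> {1..p}" "x \<in> block i"
    unfolding T_def by force
  then show "D j dvd x"
  proof cases
    case 2
    then have "i \<le> j" using block_index_mono assms \<open>x \<le> s\<close> by blast
    then show ?thesis using 2 D_dvd_D dvd_trans unfolding block_def by blast
  qed simp
qed

lemma T_saturated:
  assumes "s \<in> T" "s \<noteq> 0"
  shows "s + dA T s \<in> T"
proof -
  consider "F < s" | j where "j \<in> {1..p}" "s \<in> block j"
    using assms unfolding T_def by auto
  then show ?thesis
  proof cases
    case 2
    then have "D j dvd s + dA T s" "n j \<le> s + dA T s"
      using D_dvd_dA_T unfolding block_def by auto
    then show ?thesis using 2(1) by (rule multiple_mem_T[rotated])
  qed (simp add: T_def)
qed

lemma T_in_Sat: "T \<in> Sat F"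
proof (rule in_SatI[OF _ T_add T_saturated])
  show "F \<notin> T"
  proof
    assume "F \<in> T"
    then obtain j where "j \<in> {1..p}" "F \<in> block j" using n_last unfolding T_def by auto
    then show False using block_below_F by blast
  qed
qed (simp_all add: T_def)

lemma generators_subset_T: "n ` {1..p} \<subseteq> T"
  using n_mem_block unfolding T_def by blast

lemma T_subset_Sat:
  assumes S: "S \<in> Sat F" "n ` {1..p} \<subseteq> S"
  shows "T \<subseteq> S"
proof
  fix x assume "x \<in> T"
  have sat: "saturated S" using S(1) unfolding Sat_def by simp
  then have "0 \<in> S" unfolding saturated_def numerical_semigroup_def by simp
  moreover have "x \<in> S" if "j \<in> {1..p}" "x \<in> block j" for j
  proof -
    have "dA S (n j) dvd D j"
      unfolding D_def
      using S(2) n_le that(1) by (intro Gcd_greatest dA_dvd) auto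
    moreover have "D j dvd x - n j"
      using that D_dvd_n[of j j] unfolding block_def by (auto intro: dvd_diff_nat)
    ultimately have "n j + (x - n j) \<in> S"
      using S(2) n_pos that(1) by (intro saturated_add_dvd_dA[OF sat]) (auto intro: dvd_trans)
    then show ?thesis using that unfolding block_def by simp
  qed
  ultimately show "x \<in> S"
    using \<open>x \<in> T\<close> Sat_mem_if_gt[OF S(1)] unfolding T_def by blast
qed

lemma generators_Sat_set: "Sat_set F (n ` {1..p})"
proof -
  have "n ` {1..p} \<inter> Delta (F + 1) = {}"
    using n_pos n_le[of _ p] n_last unfolding Delta_def by fastforce
  then show ?thesis
    unfolding Sat_set_def using T_in_Sat generators_subset_T by blast
qed

lemma Sat_closure_generators: "Sat_closure F (n ` {1..p}) = T"
  using T_in_Sat generators_subset_T T_subset_Sat by (rule Sat_closure_eqI)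

end

theorem lemma43:
  fixes F p :: nat and n :: "nat \<Rightarrow> nat"
  assumes "F > 0" and "p \<ge> 1"
    and "\<And>i. 1 \<le> i \<Longrightarrow> i \<le> p \<Longrightarrow> n i > 0"
    and "\<And>i. 1 \<le> i \<Longrightarrow> i < p \<Longrightarrow> n i < n (Suc i)"
    and "n p < F"
    and "\<not> Gcd (n ` {1..p}) dvd F"
  shows "Sat_set F (n ` {1..p}) \<and>
    Sat_closure F (n ` {1..p}) =
      {0} \<union>
      (\<Union>j\<in>{1..p}. {n j + k * Gcd (n ` {1..j}) | k.
          k \<le> (if j < p
                 then (GREATEST k. n j + k * Gcd (n ` {1..j}) < n (Suc j))
                 else (GREATEST k. n p + k * Gcd (n ` {1..p}) < F))}) \<union>
      {x. x \<ge> F + 1}"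
proof -
  interpret Sat_generators F p n
    using assms(2-) by unfold_locales
  have "{n j + k * Gcd (n ` {1..j}) | k.
          k \<le> (if j < p
                 then (GREATEST k. n j + k * Gcd (n ` {1..j}) < n (Suc j))
                 else (GREATEST k. n p + k * Gcd (n ` {1..p}) < F))} = block j"
    if "j \<in> {1..p}" for j
    using block_eq_progression[OF that] that unfolding D_def L_def by (cases "j < p") auto
  moreover have "{x. x \<ge> F + 1} = {x. F < x}" by auto
  ultimately show ?thesis
    using generators_Sat_set Sat_closure_generators unfolding T_def by simp
qed

end
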